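(* Let $k\ge2$, $\ell\ge1$, and let $Z'_k(\ell)$ be the sequence $\mathrm{rev}_{k,\ell}(0),\mathrm{rev}_{k,\ell}(1),\dots,\mathrm{rev}_{k,\ell}(k^\ell-1)$. (1) If $b_1,\dots,b_d$ is a palindromic sequence of integers in $\{0,\dots,k^\ell-1\}$ that is strictly decreasing, then $b_1,\dots,b_d$ is a subsequence of $Z'_k(\ell)$ (its terms appear in $Z'_k(\ell)$ in this order). (2) Conversely, if a subsequence of $Z'_k(\ell)$ is palindromic, then it is strictly decreasing.
   Context: For integers $k\ge2$, $\ell\ge1$ and $0\le x<k^\ell$, write $x$ in base $k$ as a string of exactly $\ell$ digits (padding with leading zeros); $\mathrm{rev}_{k,\ell}(x)$ is the integer whose $\ell$-digit base-$k$ string is the reversal of that of $x$. A sequence $b_1,\dots,b_d$ of integers in $\{0,\dots,k^\ell-1\}$ is palindromic (with respect to $k$ and $\ell$) if $\mathrm{rev}_{k,\ell}(b_i)=b_{d+1-i}$ for all $i\in\{1,\dots,d\}$. $Z'_k(\ell)$ is the stable configuration $Z_k(\ell)$ of labeled chip-firing (with $1$ subtracted from each entry), which equals the radix-$k$ digit-reversal permutation. *)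

theory Defs
  imports Main "HOL-Library.Sublist"
begin

definition digit :: "nat \<Rightarrow> nat \<Rightarrow> nat \<Rightarrow> nat" where
  "digit k i x = x div k ^ i mod k"

text \<open>rev_{k,l}(x): reverse the l-digit base-k representation of x (leading zeros padded).\<close>
definition rev_digits :: "nat \<Rightarrow> nat \<Rightarrow> nat \<Rightarrow> nat" where
  "rev_digits k l x = (\<Sum>i<l. digit k i x * k ^ (l - 1 - i))"

definition Zprime :: "nat \<Rightarrow> nat \<Rightarrow> nat list" where
  "Zprime k l = map (rev_digits k l) [0..<k ^ l]"

definition palindromic :: "nat \<Rightarrow> nat \<Rightarrow> nat list \<Rightarrow> bool" where
  "palindromic k l bs \<longleftrightarrow> (\<forall>b\<in>set bs. b < k ^ l) \<and>
     (\<forall>i<length bs. rev_digits k l (bs ! i) = bs ! (length bs - 1 - i))"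

definition strictly_decreasing :: "nat list \<Rightarrow> bool" where
  "strictly_decreasing bs \<longleftrightarrow> sorted_wrt (>) bs"

end

theory Submission
  imports Defs
begin

text \<open>Writing \<open>r = rev_digits k l\<close>, palindromicity of \<open>bs\<close> says exactly \<open>map r bs = rev bs\<close>,
  i.e. \<open>bs = map r (rev bs)\<close>. Since \<open>Z'_k(l) = map r [0..<k^l]\<close> and \<open>r\<close> is an involution on
  \<open>{0..<k^l}\<close>, a palindromic \<open>bs\<close> is a subsequence of \<open>Z'_k(l)\<close> iff \<open>rev bs\<close> is a subsequence
  of \<open>[0..<k^l]\<close>, i.e. iff \<open>rev bs\<close> is strictly increasing.\<close>

lemma sum_base_expansion_Suc:
  "(\<Sum>i<Suc l. c i * (k::nat) ^ i) = c 0 + k * (\<Sum>i<l. c (Suc i) * k ^ i)"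
  unfolding sum.lessThan_Suc_shift by (simp add: sum_distrib_left mult.assoc mult.left_commute)

lemma digit_sum_base_expansion:
  assumes "\<forall>i<l. c i < k" and "j < l"
  shows "digit k j (\<Sum>i<l. c i * k ^ i) = c j"
  using assms
proof (induction l arbitrary: c j)
  case 0
  then show ?case by simp
next
  case (Suc l)
  have c0: "c 0 < k" using Suc.prems by auto
  show ?case
  proof (cases j)
    case 0
    then show ?thesis using c0 unfolding sum_base_expansion_Suc by (simp add: digit_def)
  next
    case (Suc j')
    have "digit k j (\<Sum>i<Suc l. c i * k ^ i)
        = (c 0 + k * (\<Sum>i<l. c (Suc i) * k ^ i)) div k div k ^ j' mod k"
      unfolding sum_base_expansion_Suc by (simp add: digit_def Suc div_mult2_eq mult.commute)
    also have "(c 0 + k * (\<Sum>i<l. c (Suc i) * k ^ i)) div k = (\<Sum>i<l. c (Suc i) * k ^ i)"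
      using c0 by simp
    also have "(\<Sum>i<l. c (Suc i) * k ^ i) div k ^ j' mod k = c (Suc j')"
      using Suc.IH[of "\<lambda>i. c (Suc i)" j'] Suc.prems \<open>j = Suc j'\<close> by (simp add: digit_def)
    finally show ?thesis using Suc by simp
  qed
qed

lemma sum_digits_base_expansion:
  assumes "(x::nat) < k ^ l"
  shows "(\<Sum>i<l. digit k i x * k ^ i) = x"
  using assms
proof (induction l arbitrary: x)
  case 0
  then show ?case by simp
next
  case (Suc l)
  have "x div k < k ^ l"
    using Suc.prems by (metis less_mult_imp_div_less mult.commute power_Suc)
  then have IH: "(\<Sum>i<l. digit k i (x div k) * k ^ i) = x div k"
    using Suc.IH by blast
  have "digit k (Suc i) x = digit k i (x div k)" for i
    by (simp add: digit_def div_mult2_eq)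
  then have "(\<Sum>i<Suc l. digit k i x * k ^ i) = digit k 0 x + k * (x div k)"
    unfolding sum_base_expansion_Suc by (simp add: IH)
  then show ?case by (simp add: digit_def)
qed

lemma rev_digits_base_expansion:
  "rev_digits k l x = (\<Sum>i<l. digit k (l - 1 - i) x * k ^ i)"
  unfolding rev_digits_def
  by (rule sum.reindex_bij_witness[where i="\<lambda>i. l - 1 - i" and j="\<lambda>i. l - 1 - i"]) auto

lemma digit_rev_digits:
  assumes "k > 0" and "j < l"
  shows "digit k j (rev_digits k l x) = digit k (l - 1 - j) x"
  unfolding rev_digits_base_expansion
  using assms by (subst digit_sum_base_expansion) (auto simp: digit_def)

lemma rev_digits_rev_digits:
  assumes "k > 0" and "x < k ^ l"
  shows "rev_digits k l (rev_digits k l x) = x"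
proof -
  have "rev_digits k l (rev_digits k l x) = (\<Sum>i<l. digit k i x * k ^ i)"
    unfolding rev_digits_base_expansion[of k l "rev_digits k l x"]
    using assms(1) by (intro sum.cong) (auto simp: digit_rev_digits)
  also have "\<dots> = x"
    using assms(2) by (rule sum_digits_base_expansion)
  finally show ?thesis .
qed

lemma palindromic_iff:
  "palindromic k l bs \<longleftrightarrow> (\<forall>b\<in>set bs. b < k ^ l) \<and> map (rev_digits k l) bs = rev bs"
  unfolding palindromic_def list_eq_iff_nth_eq by (auto simp: rev_nth)

lemma palindromic_strictly_decreasing_imp_subseq_Zprime:
  assumes "palindromic k l bs" and "strictly_decreasing bs"
  shows "subseq bs (Zprime k l)"
proof -
  have "subseq (rev bs) [0..<k ^ l]"
    using assms by (intro sorted_subset_imp_subseq)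
      (auto simp: palindromic_iff strictly_decreasing_def sorted_wrt_rev)
  then have "subseq (map (rev_digits k l) (rev bs)) (Zprime k l)"
    unfolding Zprime_def by (rule subseq_map)
  moreover have "map (rev_digits k l) (rev bs) = bs"
    using assms(1) by (metis palindromic_iff rev_map rev_rev_ident)
  ultimately show ?thesis by simp
qed

lemma palindromic_subseq_Zprime_imp_strictly_decreasing:
  assumes "k > 0" and "subseq bs (Zprime k l)" and "palindromic k l bs"
  shows "strictly_decreasing bs"
proof -
  obtain N where "bs = nths (Zprime k l) N"
    using assms(2) subseq_conv_nths by blast
  define xs where "xs = nths [0..<k ^ l] N"
  have bs_xs: "bs = map (rev_digits k l) xs"
    using \<open>bs = nths (Zprime k l) N\<close> by (simp add: xs_def Zprime_def nths_map)
  have "set xs \<subseteq> {..<k ^ l}"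
    using set_nths_subset[of "[0..<k ^ l]" N] by (auto simp: xs_def)
  then have "map (rev_digits k l) bs = xs"
    using assms(1) by (simp add: bs_xs map_idI rev_digits_rev_digits subset_iff)
  then have "bs = rev xs"
    using assms(3) by (simp add: palindromic_iff)
  moreover have "sorted_wrt (<) xs"
    by (simp add: xs_def strict_sorted_iff sorted_nths)
  ultimately show ?thesis
    by (simp add: strictly_decreasing_def sorted_wrt_rev)
qed

theorem lemma7p1:
  fixes k l :: nat
  assumes "k \<ge> 2" and "l \<ge> 1"
  shows "(\<forall>bs. palindromic k l bs \<and> strictly_decreasing bs \<longrightarrow> subseq bs (Zprime k l))
    \<and> (\<forall>bs. subseq bs (Zprime k l) \<and> palindromic k l bs \<longrightarrow> strictly_decreasing bs)"
proof -
  have "k > 0" using assms(1) by simp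
  then show ?thesis
    using palindromic_strictly_decreasing_imp_subseq_Zprime
          palindromic_subseq_Zprime_imp_strictly_decreasing
    by blast
qed

end
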